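(* Let $n>m\ge 1$. In the checker game on $n+m+1$ positions, each of the configurations $b^{n-m}O(wb)^m$ and $b^{n-m}(wb)^mO$ can be transformed, by a sequence of exactly $(n-m)(m+1)$ legal moves, into one of the configurations $(wb)^mOb^{n-m}$ or $O(wb)^mb^{n-m}$.
   Context: Positions $1,\dots,n+m+1$ in a row; a configuration is a word over $\{b,w,O\}$ with exactly one $O$, where $b$ denotes a black checker, $w$ a white checker and $O$ the vacancy; exponents denote repetition (e.g. $(wb)^m$ is $wb$ repeated $m$ times). A legal move is either a slide (a checker adjacent to the vacancy moves into it) or a jump (a checker at distance two from the vacancy jumps over the checker between them into the vacancy). *)

theory Defs
  imports Main
begin

datatype cell = Black | White | Vac  (* b, w, O *)

type_synonym config = "cell list"

definition legal_move :: "config \<Rightarrow> config \<Rightarrow> bool" where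
  "legal_move c c' \<longleftrightarrow>
     (\<exists>i j. i < length c \<and> j < length c \<and> c ! i = Vac \<and> c ! j \<noteq> Vac \<and>
        (j = i + 1 \<or> i = j + 1 \<or> j = i + 2 \<or> i = j + 2) \<and>
        c' = c[i := c ! j, j := Vac])"

definition wb_pow :: "nat \<Rightarrow> config" where
  "wb_pow m = concat (replicate m [White, Black])"

end

theory Submission
  imports Defs
begin

text \<open>One round moves the innermost checker of the left black block across the alternating
  block \<open>(wb)\<^sup>m\<close>: it first slides onto the vacancy, and then the vacancy travels back across
  \<open>(wb)\<^sup>m\<close> by \<open>m\<close> jumps, each jump carrying the vacancy over one pair.  A round costs
  \<open>m + 1\<close> moves and leaves the vacancy at the opposite end of \<open>(wb)\<^sup>m\<close>, so \<open>n - m\<close> rounds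
  move the whole left block to the right and end with the vacancy at one of the two ends.\<close>

definition bw_pow :: "nat \<Rightarrow> config" where
  "bw_pow m = concat (replicate m [Black, White])"

lemma wb_pow_0 [simp]: "wb_pow 0 = []"
  and bw_pow_0 [simp]: "bw_pow 0 = []"
  by (simp_all add: wb_pow_def bw_pow_def)

lemma wb_pow_Suc: "wb_pow (Suc m) = White # Black # wb_pow m"
  by (simp add: wb_pow_def)

lemma bw_pow_Suc: "bw_pow (Suc m) = Black # White # bw_pow m"
  by (simp add: bw_pow_def)

lemma wb_pow_Suc_snoc: "wb_pow (Suc m) = wb_pow m @ [White, Black]"
  by (simp add: wb_pow_def replicate_append_same[symmetric])

lemma bw_pow_Suc_snoc: "bw_pow (Suc m) = bw_pow m @ [Black, White]"
  by (simp add: bw_pow_def replicate_append_same[symmetric])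

lemma Black_Cons_wb_pow: "Black # wb_pow m @ xs = bw_pow m @ Black # xs"
  by (induction m arbitrary: xs) (simp_all add: wb_pow_Suc bw_pow_Suc)

lemma legal_move_slide_right:
  "x \<noteq> Vac \<Longrightarrow> legal_move (u @ x # Vac # v) (u @ Vac # x # v)"
  unfolding legal_move_def
  by (rule exI[of _ "Suc (length u)"], rule exI[of _ "length u"])
     (simp add: nth_append list_update_append)

lemma legal_move_jump_right:
  "x \<noteq> Vac \<Longrightarrow> legal_move (u @ x # y # Vac # v) (u @ Vac # y # x # v)"
  unfolding legal_move_def
  by (rule exI[of _ "Suc (Suc (length u))"], rule exI[of _ "length u"])
     (simp add: nth_append list_update_append)

lemma legal_move_jump_left:
  "x \<noteq> Vac \<Longrightarrow> legal_move (u @ Vac # y # x # v) (u @ x # y # Vac # v)"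
  unfolding legal_move_def
  by (rule exI[of _ "length u"], rule exI[of _ "Suc (Suc (length u))"])
     (simp add: nth_append list_update_append)

lemma whites_jump_left:
  "(legal_move ^^ m) (u @ Vac # bw_pow m @ v) (u @ wb_pow m @ Vac # v)"
proof (induction m arbitrary: u)
  case 0
  show ?case by simp
next
  case (Suc m)
  have "legal_move (u @ Vac # bw_pow (Suc m) @ v) ((u @ [White, Black]) @ Vac # bw_pow m @ v)"
    using legal_move_jump_left[of White u Black "bw_pow m @ v"] by (simp add: bw_pow_Suc)
  from relpowp_Suc_I2[OF this Suc.IH] show ?case
    by (simp add: wb_pow_Suc)
qed

lemma blacks_jump_right:
  "(legal_move ^^ m) (u @ bw_pow m @ Vac # v) (u @ Vac # wb_pow m @ v)"
proof (induction m arbitrary: v)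
  case 0
  show ?case by simp
next
  case (Suc m)
  have "legal_move (u @ bw_pow (Suc m) @ Vac # v) (u @ bw_pow m @ Vac # White # Black # v)"
    using legal_move_jump_right[of Black "u @ bw_pow m" White v] by (simp add: bw_pow_Suc_snoc)
  from relpowp_Suc_I2[OF this Suc.IH] show ?case
    by (simp add: wb_pow_Suc_snoc)
qed

definition board :: "nat \<Rightarrow> nat \<Rightarrow> bool \<Rightarrow> nat \<Rightarrow> config" where
  "board m j vac_left r =
     replicate j Black @ (if vac_left then Vac # wb_pow m else wb_pow m @ [Vac]) @ replicate r Black"

lemma round_from_vac_left:
  "(legal_move ^^ Suc m) (board m (Suc j) True r) (board m j False (Suc r))"
proof -
  have "legal_move (board m (Suc j) True r)
          (replicate j Black @ Vac # bw_pow m @ Black # replicate r Black)"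
    using legal_move_slide_right[of Black "replicate j Black" "wb_pow m @ replicate r Black"]
    by (simp add: board_def replicate_app_Cons_same Black_Cons_wb_pow)
  from relpowp_Suc_I2[OF this whites_jump_left] show ?thesis
    by (simp add: board_def)
qed

lemma round_from_vac_right:
  "(legal_move ^^ Suc m) (board m (Suc j) False r) (board m j True (Suc r))"
proof -
  have "legal_move (board m (Suc j) False r)
          (replicate j Black @ bw_pow m @ Vac # Black # replicate r Black)"
    using legal_move_slide_right[of Black "replicate j Black @ bw_pow m" "replicate r Black"]
    by (simp add: board_def Black_Cons_wb_pow replicate_app_Cons_same[symmetric]
        del: replicate_app_Cons_same)
  from relpowp_Suc_I2[OF this blacks_jump_right] show ?thesis
    by (simp add: board_def)
qed

lemma board_after_rounds:
  "(legal_move ^^ (j * Suc m)) (board m j vac_left r) (board m 0 (vac_left = even j) (j + r))"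
proof (induction j arbitrary: vac_left r)
  case 0
  show ?case by simp
next
  case (Suc j)
  have round: "(legal_move ^^ Suc m) (board m (Suc j) vac_left r) (board m j (\<not> vac_left) (Suc r))"
    using round_from_vac_left round_from_vac_right by (cases vac_left) simp_all
  have "(legal_move ^^ (Suc m + j * Suc m)) (board m (Suc j) vac_left r)
          (board m 0 ((\<not> vac_left) = even j) (j + Suc r))"
    unfolding relpowp_add using round Suc.IH by blast
  moreover have "Suc m + j * Suc m = Suc j * Suc m" and "j + Suc r = Suc j + r"
    and "((\<not> vac_left) = even j) = (vac_left = even (Suc j))"
    by auto
  ultimately show ?case by (simp only:)
qed

theorem lemma4:
  fixes n m :: nat
  assumes "n > m" and "m \<ge> 1"
  shows "\<forall>c \<in> {replicate (n - m) Black @ [Vac] @ wb_pow m, replicate (n - m) Black @ wb_pow m @ [Vac]}.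
           \<exists>c' \<in> {wb_pow m @ [Vac] @ replicate (n - m) Black, [Vac] @ wb_pow m @ replicate (n - m) Black}.
             (legal_move ^^ ((n - m) * (m + 1))) c c'"
proof -
  have "\<exists>c' \<in> {board m 0 False (n - m), board m 0 True (n - m)}.
          (legal_move ^^ ((n - m) * Suc m)) (board m (n - m) vac_left 0) c'" for vac_left
  proof
    show "board m 0 b (n - m) \<in> {board m 0 False (n - m), board m 0 True (n - m)}" for b
      by (cases b) simp_all
  qed (use board_after_rounds[of "n - m" m vac_left 0] in simp)
  from this[of True] this[of False] show ?thesis
    by (simp add: board_def)
qed

end
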